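(* Run Algorithm $\mathsf{LAR}$ with parameters $p=\sqrt2-1$ and $\alpha=\sqrt{2+2\sqrt2}$. It uses $O(n)$ queries to $f$ and returns a set $S$ with $c(S)\le B$ and $$\mathrm{opt}\le 16.034\,\mathbb{E}[f(S)],$$ where $\mathrm{opt}=\max\{f(T):T\subseteq V,\ c(T)\le B\}$.
   Context: Setting: $V$ is a finite ground set of size $n$. $f:2^V\to\mathbb{R}_{\ge 0}$ is a non-negative submodular set function with $f(\emptyset)=0$. Each $e\in V$ has a cost $c(e)>0$, and $c(S)=\sum_{e\in S}c(e)$. $B>0$ is a budget, and $c(e)\le B$ for every $e\in V$. A query is one evaluation of $f$ on a set. The notation $f(e\mid S)=f(S\cup\{e\})-f(S)$ is used. Algorithm $\mathsf{LAR}$ on $(f,V,B)$ with parameters $p\in(0,1]$ and $\alpha>0$ runs as follows. 1. Let $e_{\max}\in\arg\max_{e\in V}f(e)$ and $V_1=\{e\in V:c(e)\le B/2\}$. 2. Form $V_p$ by including each $e\in V_1$ independently with probability $p$. Set $S=\emptyset$. 3. Process each $e\in V_p$ once, in an arbitrary fixed order. If $f(e\mid S)/c(e)\ge \alpha f(S)/B$, add $e$ to $S$. 4. Let $S(j)$ denote the set of the last $j$ elements added to $S$. Let $S'$ be the set $S(j)$ of largest cost among those with $0\le j\le|S|$ and $c(S(j))\le B$. 5. Return whichever of $S'$ and $\{e_{\max}\}$ has the larger $f$ value. The expectation is over the random choice of $V_p$. *)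

theory Defs
  imports "HOL-Probability.Probability"
begin

definition cost :: "('a \<Rightarrow> real) \<Rightarrow> 'a set \<Rightarrow> real" where
  "cost c S = (\<Sum>e\<in>S. c e)"

definition nonneg_submodular :: "'a set \<Rightarrow> ('a set \<Rightarrow> real) \<Rightarrow> bool" where
  "nonneg_submodular V f \<longleftrightarrow>
     f {} = 0 \<and> (\<forall>S. S \<subseteq> V \<longrightarrow> f S \<ge> 0) \<and>
     (\<forall>A B. A \<subseteq> V \<longrightarrow> B \<subseteq> V \<longrightarrow> f A + f B \<ge> f (A \<union> B) + f (A \<inter> B))"

definition marg :: "('a set \<Rightarrow> real) \<Rightarrow> 'a \<Rightarrow> 'a set \<Rightarrow> real" where
  "marg f e S = f (S \<union> {e}) - f S"

text \<open>Step 3 (instrumented).  The state is (list of added elements in order of addition,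
  number of queries so far).  Processing an element evaluates f on S \<union> {e} and on S
  (two queries).\<close>
definition lar_step :: "('a set \<Rightarrow> real) \<Rightarrow> ('a \<Rightarrow> real) \<Rightarrow> real \<Rightarrow> real \<Rightarrow>
    'a list \<times> nat \<Rightarrow> 'a \<Rightarrow> 'a list \<times> nat" where
  "lar_step f c B \<alpha> st e =
     (let (L, q) = st; S = set L in
      if marg f e S / c e \<ge> \<alpha> * f S / B then (L @ [e], q + 2) else (L, q + 2))"

definition lar_greedy :: "('a set \<Rightarrow> real) \<Rightarrow> ('a \<Rightarrow> real) \<Rightarrow> real \<Rightarrow> real \<Rightarrow>
    'a list \<Rightarrow> 'a set \<Rightarrow> 'a list \<times> nat" where
  "lar_greedy f c B \<alpha> ord Vp = foldl (lar_step f c B \<alpha>) ([], 0) (filter (\<lambda>e. e \<in> Vp) ord)"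

definition last_added :: "'a list \<Rightarrow> nat \<Rightarrow> 'a set" where
  "last_added L j = set (drop (length L - j) L)"

definition lar_suffix :: "('a \<Rightarrow> real) \<Rightarrow> real \<Rightarrow> 'a list \<Rightarrow> 'a set" where
  "lar_suffix c B L =
     last_added L (ARG_MAX (\<lambda>j. cost c (last_added L j)) j.
                     j \<le> length L \<and> cost c (last_added L j) \<le> B)"

definition e_max :: "'a set \<Rightarrow> ('a set \<Rightarrow> real) \<Rightarrow> 'a" where
  "e_max V f = (ARG_MAX (\<lambda>e. f {e}) e. e \<in> V)"

definition V_half :: "'a set \<Rightarrow> ('a \<Rightarrow> real) \<Rightarrow> real \<Rightarrow> 'a set" where
  "V_half V c B = {e \<in> V. c e \<le> B / 2}"

definition sample_pmf :: "'a set \<Rightarrow> real \<Rightarrow> 'a set pmf" where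
  "sample_pmf V1 p = map_pmf (\<lambda>b. {e \<in> V1. b e}) (Pi_pmf V1 False (\<lambda>_. bernoulli_pmf p))"

text \<open>Step 1 uses |V| queries (f on all singletons),
  step 3 two queries per processed element, step 5 two queries.\<close>
definition lar_run :: "'a set \<Rightarrow> ('a set \<Rightarrow> real) \<Rightarrow> ('a \<Rightarrow> real) \<Rightarrow> real \<Rightarrow> real \<Rightarrow>
    'a list \<Rightarrow> 'a set \<Rightarrow> 'a set \<times> nat" where
  "lar_run V f c B \<alpha> ord Vp =
     (let em = e_max V f;
          (L, q) = lar_greedy f c B \<alpha> ord Vp;
          S' = lar_suffix c B L
      in (if f S' \<ge> f {em} then S' else {em}, card V + q + 2))"

definition LAR :: "'a set \<Rightarrow> ('a set \<Rightarrow> real) \<Rightarrow> ('a \<Rightarrow> real) \<Rightarrow> real \<Rightarrow> real \<Rightarrow> real \<Rightarrow>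
    'a list \<Rightarrow> ('a set \<times> nat) pmf" where
  "LAR V f c B p \<alpha> ord = map_pmf (lar_run V f c B \<alpha> ord) (sample_pmf (V_half V c B) p)"

definition opt :: "'a set \<Rightarrow> ('a set \<Rightarrow> real) \<Rightarrow> ('a \<Rightarrow> real) \<Rightarrow> real \<Rightarrow> real" where
  "opt V f c B = Max {f T | T. T \<subseteq> V \<and> cost c T \<le> B}"

end

theory Submission
  imports Defs
begin

text \<open>
  Let \<open>S\<close> be the list produced by the threshold pass over the sample \<open>V\<^sub>p\<close>, and
  let \<open>O = O\<^sub>1 \<union> O\<^sub>2\<close> be an optimal set split into cheap (cost \<open>\<le> B/2\<close>) and
  expensive elements; \<open>O\<^sub>2\<close> has at most one element, which is covered by \<open>e\<^sub>m\<^sub>a\<^sub>x\<close>.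
  An element \<open>u \<in> O\<^sub>1\<close> that was rejected when it was processed has, by diminishing
  returns, marginal gain on \<open>S\<close> below the threshold \<open>\<alpha> c(u) f(S)/B\<close>; an element not in
  the sample has marginal gain at most its gain \<open>G(u)\<close> at the moment it would have been
  processed. Since \<open>G(u)\<close> does not depend on whether \<open>u\<close> is sampled, the expected total of
  the unsampled gains is \<open>(1-p)/p\<close> times that of the sampled ones, which telescope to at
  most \<open>f(S)\<close>. Thus \<open>E f(S \<union> O\<^sub>1) \<le> (1 + \<alpha> c(O\<^sub>1)/B + (1-p)/p) E f(S)\<close>, while
  \<open>E f(S \<union> O\<^sub>1) \<ge> (1-p) f(O\<^sub>1)\<close> because every element lies in \<open>S\<close> with probability at most
  \<open>p\<close>. Finally, every accepted element raised \<open>f\<close> by an \<open>\<alpha> c(e)/B\<close> fraction, so the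
  longest suffix of \<open>S\<close> that fits in the budget retains a \<open>1/(1 + 2/\<alpha>)\<close> fraction of \<open>f(S)\<close>.
\<close>

section \<open>The threshold pass\<close>

definition lar_accepts ::
    "('a set \<Rightarrow> real) \<Rightarrow> ('a \<Rightarrow> real) \<Rightarrow> real \<Rightarrow> real \<Rightarrow> 'a list \<Rightarrow> 'a \<Rightarrow> bool" where
  "lar_accepts f c B \<alpha> L e \<longleftrightarrow> \<alpha> * f (set L) / B \<le> marg f e (set L) / c e"

definition lar_pass ::
    "('a set \<Rightarrow> real) \<Rightarrow> ('a \<Rightarrow> real) \<Rightarrow> real \<Rightarrow> real \<Rightarrow> 'a list \<Rightarrow> 'a list \<Rightarrow> 'a list" where
  "lar_pass f c B \<alpha> L xs = foldl (\<lambda>L e. if lar_accepts f c B \<alpha> L e then L @ [e] else L) L xs"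

lemma lar_pass_Nil [simp]: "lar_pass f c B \<alpha> L [] = L"
  by (simp add: lar_pass_def)

lemma lar_pass_Cons [simp]:
  "lar_pass f c B \<alpha> L (x # xs) =
     lar_pass f c B \<alpha> (if lar_accepts f c B \<alpha> L x then L @ [x] else L) xs"
  by (simp add: lar_pass_def)

lemma lar_pass_append:
  "lar_pass f c B \<alpha> L (xs @ ys) = lar_pass f c B \<alpha> (lar_pass f c B \<alpha> L xs) ys"
  by (simp add: lar_pass_def)

lemma foldl_lar_step:
  "foldl (lar_step f c B \<alpha>) (L, q) xs = (lar_pass f c B \<alpha> L xs, q + 2 * length xs)"
  by (induction xs arbitrary: L q) (simp_all add: lar_step_def lar_accepts_def Let_def)

lemma set_lar_pass_subset: "set (lar_pass f c B \<alpha> L xs) \<subseteq> set L \<union> set xs"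
  by (induction xs arbitrary: L) (auto, fastforce+)

lemma set_lar_pass_mono: "set L \<subseteq> set (lar_pass f c B \<alpha> L xs)"
  by (induction xs arbitrary: L) (auto, fastforce+)

lemma distinct_lar_pass:
  "distinct L \<Longrightarrow> distinct xs \<Longrightarrow> set L \<inter> set xs = {} \<Longrightarrow> distinct (lar_pass f c B \<alpha> L xs)"
  by (induction xs arbitrary: L) auto

section \<open>Non-negative submodular functions\<close>

locale nonneg_submodular_fun =
  fixes V :: "'a set" and f :: "'a set \<Rightarrow> real"
  assumes nonneg_submodular: "nonneg_submodular V f"
begin

lemma f_empty [simp]: "f {} = 0"
  using nonneg_submodular by (simp add: nonneg_submodular_def)

lemma f_nonneg: "S \<subseteq> V \<Longrightarrow> 0 \<le> f S"
  using nonneg_submodular by (simp add: nonneg_submodular_def)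

lemma submodular: "X \<subseteq> V \<Longrightarrow> Y \<subseteq> V \<Longrightarrow> f (X \<union> Y) + f (X \<inter> Y) \<le> f X + f Y"
  using nonneg_submodular by (simp add: nonneg_submodular_def)

lemma subadditive: "X \<subseteq> V \<Longrightarrow> Y \<subseteq> V \<Longrightarrow> f (X \<union> Y) \<le> f X + f Y"
  using submodular[of X Y] f_nonneg[of "X \<inter> Y"] by fastforce

lemma marg_antimono:
  assumes "S \<subseteq> T" "T \<subseteq> V" "e \<in> V" "e \<notin> T"
  shows "marg f e T \<le> marg f e S"
proof -
  have "(S \<union> {e}) \<union> T = T \<union> {e}" "(S \<union> {e}) \<inter> T = S" "S \<union> {e} \<subseteq> V"
    using assms by auto
  with submodular[of "S \<union> {e}" T] assms(2) show ?thesis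
    by (simp add: marg_def)
qed

lemma f_union_le_sum_marg:
  assumes "finite X" "X \<subseteq> V" "S \<subseteq> V"
  shows "f (S \<union> X) \<le> f S + (\<Sum>x\<in>X. marg f x S)"
  using assms(1,2)
proof (induction X rule: finite_induct)
  case empty
  then show ?case by simp
next
  case (insert x X)
  have "f (S \<union> insert x X) - f (S \<union> X) \<le> marg f x S"
  proof (cases "x \<in> S")
    case True
    then show ?thesis by (simp add: marg_def insert_absorb)
  next
    case False
    then have "marg f x (S \<union> X) \<le> marg f x S"
      using marg_antimono[of S "S \<union> X" x] insert assms by auto
    then show ?thesis by (simp add: marg_def)
  qed
  then show ?case using insert by simp
qed

end

section \<open>Random subsets\<close>

text \<open>Induction on \<open>U\<close>: removing the element \<open>u\<close> of smallest marginal probability costs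
  at most \<open>(g(U) - g(U - {u})) Pr[u \<in> A]\<close> by submodularity, and leaves all other marginals
  at least \<open>Pr[u \<in> A]\<close>.\<close>
lemma expectation_submodular_random_subset_ge:
  fixes g :: "'a set \<Rightarrow> real" and D :: "'a set pmf"
  assumes "finite U"
    and "\<And>A. A \<subseteq> U \<Longrightarrow> 0 \<le> g A"
    and "\<And>X Y. X \<subseteq> U \<Longrightarrow> Y \<subseteq> U \<Longrightarrow> g (X \<union> Y) + g (X \<inter> Y) \<le> g X + g Y"
    and "finite (set_pmf D)" "\<And>A. A \<in> set_pmf D \<Longrightarrow> A \<subseteq> U"
    and "0 \<le> m" "m \<le> M"
    and "\<And>u. u \<in> U \<Longrightarrow> m \<le> measure_pmf.prob D {A. u \<in> A} \<and> measure_pmf.prob D {A. u \<in> A} \<le> M"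
  shows "(1 - M) * g {} + m * g U \<le> measure_pmf.expectation D g"
  using assms
proof (induction U arbitrary: D m rule: finite_remove_induct)
  case empty
  then have "D = return_pmf {}"
    by (auto simp: set_pmf_subset_singleton[symmetric])
  with empty.prems show ?case
    by (simp add: algebra_simps mult_right_mono)
next
  case (remove U)
  define q where "q v = measure_pmf.prob D {A. v \<in> A}" for v
  have "Min (q ` U) \<in> q ` U"
    using remove.hyps by (intro Min_in) auto
  then obtain u where u: "u \<in> U" "q u = Min (q ` U)"
    by auto
  have q_min: "q u \<le> q v" if "v \<in> U" for v
    using that u remove.hyps by simp
  have q_u: "0 \<le> q u" "q u \<le> M"
    using remove.prems(7)[OF u(1)] q_def by auto
  define D' where "D' = map_pmf (\<lambda>A. A - {u}) D"
  have D'_subset: "A \<subseteq> U - {u}" if "A \<in> set_pmf D'" for A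
    using that remove.prems(4) unfolding D'_def by auto
  have "(1 - M) * g {} + q u * g (U - {u}) \<le> measure_pmf.expectation D' g"
  proof (rule remove.IH[OF u(1)])
    fix v assume v: "v \<in> U - {u}"
    have "measure_pmf.prob D' {A. v \<in> A} = q v"
      unfolding D'_def q_def using v by (simp add: measure_map_pmf vimage_def)
    then show "q u \<le> measure_pmf.prob D' {A. v \<in> A} \<and> measure_pmf.prob D' {A. v \<in> A} \<le> M"
      using q_min[of v] v remove.prems(7) q_def by auto
  next
    show "0 \<le> g A" if "A \<subseteq> U - {u}" for A
      using that remove.prems(1) by blast
    show "g (X \<union> Y) + g (X \<inter> Y) \<le> g X + g Y" if "X \<subseteq> U - {u}" "Y \<subseteq> U - {u}" for X Y
      using that remove.prems(2) by blast
  qed (use remove.prems(3) D'_subset q_u in \<open>auto simp: D'_def\<close>)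
  also have "measure_pmf.expectation D' g = measure_pmf.expectation D (\<lambda>A. g (A - {u}))"
    unfolding D'_def by simp
  finally have IH: "(1 - M) * g {} + q u * g (U - {u})
      \<le> measure_pmf.expectation D (\<lambda>A. g (A - {u}))" .
  have removal: "g (A - {u}) + (if u \<in> A then g U - g (U - {u}) else 0) \<le> g A"
    if "A \<in> set_pmf D" for A
  proof (cases "u \<in> A")
    case True
    have "A \<subseteq> U" using that remove.prems(4) by auto
    then have "A \<union> (U - {u}) = U" "A \<inter> (U - {u}) = A - {u}"
      using True u by auto
    then show ?thesis
      using remove.prems(2)[of A "U - {u}"] \<open>A \<subseteq> U\<close> True by auto
  qed simp
  have int: "integrable (measure_pmf D) h" for h :: "'a set \<Rightarrow> real"
    using remove.prems(3) by (rule integrable_measure_pmf_finite)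
  have "(\<lambda>A. if u \<in> A then g U - g (U - {u}) else 0)
      = (\<lambda>A. (g U - g (U - {u})) * indicator {A. u \<in> A} A)"
    by (auto simp: indicator_def)
  then have gain: "measure_pmf.expectation D (\<lambda>A. if u \<in> A then g U - g (U - {u}) else 0)
      = (g U - g (U - {u})) * q u"
    unfolding q_def by simp
  have "measure_pmf.expectation D (\<lambda>A. g (A - {u})) + (g U - g (U - {u})) * q u
      \<le> measure_pmf.expectation D g"
    using removal unfolding gain[symmetric] Bochner_Integration.integral_add[OF int int, symmetric]
    by (intro integral_mono_AE int) (simp add: AE_measure_pmf_iff)
  moreover have "m * g U \<le> q u * g U"
    using remove.prems(1,7) u(1) q_def by (intro mult_right_mono) auto
  ultimately show ?case
    using IH by (simp add: algebra_simps)
qed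


lemma finite_set_pmf_Pi_bernoulli:
  "finite A \<Longrightarrow> finite (set_pmf (Pi_pmf A False (\<lambda>_. bernoulli_pmf p)))"
  by (subst set_Pi_pmf) (auto intro!: finite_PiE_dflt)

lemma prob_Pi_bernoulli_component_le:
  assumes "finite A" "0 \<le> p" "p \<le> 1"
  shows "measure_pmf.prob (Pi_pmf A False (\<lambda>_. bernoulli_pmf p)) {b. b x} \<le> p"
proof -
  have "measure_pmf.prob (Pi_pmf A False (\<lambda>_. bernoulli_pmf p)) {b. b x}
      = measure_pmf.prob (map_pmf (\<lambda>b. b x) (Pi_pmf A False (\<lambda>_. bernoulli_pmf p))) {True}"
    by (simp add: measure_map_pmf vimage_def)
  also have "\<dots> = (if x \<in> A then p else 0)"
    using assms by (simp add: Pi_pmf_component measure_pmf_single)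
  finally show ?thesis using assms by simp
qed

lemma expectation_Pi_bernoulli_if_component:
  fixes G :: "('a \<Rightarrow> bool) \<Rightarrow> real"
  assumes "finite A" "x \<in> A" "0 \<le> p" "p \<le> 1"
    and G_indep: "\<And>b t. G (b(x := t)) = G b"
  shows "measure_pmf.expectation (Pi_pmf A False (\<lambda>_. bernoulli_pmf p)) (\<lambda>b. if b x then G b else 0)
       = p * measure_pmf.expectation (Pi_pmf A False (\<lambda>_. bernoulli_pmf p)) G"
proof -
  define Q where "Q = Pi_pmf (A - {x}) False (\<lambda>_. bernoulli_pmf p)"
  define R where "R = pair_pmf (bernoulli_pmf p) Q"
  have "A = insert x (A - {x})" using assms(2) by auto
  then have split: "Pi_pmf A False (\<lambda>_. bernoulli_pmf p) = map_pmf (\<lambda>(y, g). g(x := y)) R"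
    unfolding R_def Q_def using assms(1) by (metis Pi_pmf_insert finite_Diff Diff_iff insertI1)
  have fin_Q: "finite (set_pmf Q)"
    unfolding Q_def using assms(1) by (intro finite_set_pmf_Pi_bernoulli) auto
  have "measure_pmf.expectation (Pi_pmf A False (\<lambda>_. bernoulli_pmf p)) G
      = measure_pmf.expectation R (\<lambda>z. G (snd z))"
    unfolding split by (simp add: case_prod_unfold G_indep)
  also have "\<dots> = measure_pmf.expectation Q G"
    unfolding R_def by simp
  finally have E_G: "measure_pmf.expectation (Pi_pmf A False (\<lambda>_. bernoulli_pmf p)) G
      = measure_pmf.expectation Q G" .
  have "measure_pmf.expectation (Pi_pmf A False (\<lambda>_. bernoulli_pmf p)) (\<lambda>b. if b x then G b else 0)
      = measure_pmf.expectation R (\<lambda>z. if fst z then G (snd z) else 0)"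
    unfolding split integral_map_pmf
    by (rule Bochner_Integration.integral_cong) (auto simp: case_prod_unfold G_indep)
  also have "\<dots> = (\<Sum>z\<in>UNIV \<times> set_pmf Q. (if fst z then G (snd z) else 0) * pmf R z)"
    using fin_Q by (intro integral_measure_pmf_real) (auto simp: R_def)
  also have "\<dots> = (\<Sum>y\<in>UNIV. \<Sum>g\<in>set_pmf Q. (if y then G g else 0) * (pmf (bernoulli_pmf p) y * pmf Q g))"
    by (simp add: sum.cartesian_product R_def case_prod_unfold)
      (rule sum.cong[OF refl], metis pmf_pair prod.collapse)
  also have "\<dots> = (\<Sum>g\<in>set_pmf Q. G g * (p * pmf Q g))"
    using assms(3,4) by (simp add: UNIV_bool)
  also have "\<dots> = p * measure_pmf.expectation Q G"
    using fin_Q by (simp add: integral_measure_pmf_real[OF fin_Q] sum_distrib_left algebra_simps)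
  finally show ?thesis using E_G by simp
qed


section \<open>The accepted chain and its best suffix\<close>

lemma arg_max_finite:
  fixes g :: "'b \<Rightarrow> 'c::linorder"
  assumes "finite {x. P x}" "P k"
  shows "P (arg_max g P)" "P y \<Longrightarrow> g y \<le> g (arg_max g P)"
proof -
  have "Max (g ` {x. P x}) \<in> g ` {x. P x}"
    using assms by (intro Max_in) auto
  then obtain x where x: "P x" "g x = Max (g ` {x. P x})"
    by auto
  then have "is_arg_max g P x"
    using assms(1) by (auto simp: is_arg_max_linorder)
  then have "is_arg_max g P (arg_max g P)"
    unfolding arg_max_def by (rule someI)
  then show "P (arg_max g P)" "P y \<Longrightarrow> g y \<le> g (arg_max g P)"
    by (auto simp: is_arg_max_linorder)
qed

locale lar_setting = nonneg_submodular_fun V f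
  for V :: "'a set" and f :: "'a set \<Rightarrow> real" +
  fixes c :: "'a \<Rightarrow> real" and B \<alpha> :: real
  assumes finite_V: "finite V"
    and cost_pos: "\<And>e. e \<in> V \<Longrightarrow> 0 < c e"
    and cost_le_budget: "\<And>e. e \<in> V \<Longrightarrow> c e \<le> B"
    and budget_pos: "0 < B"
    and \<alpha>_pos: "0 < \<alpha>"
begin

lemma cost_nonneg: "X \<subseteq> V \<Longrightarrow> 0 \<le> cost c X"
  unfolding cost_def using cost_pos by (intro sum_nonneg) (fastforce intro: less_imp_le)

lemma lar_accepts_gain:
  assumes "set L \<subseteq> V" "e \<in> V" "lar_accepts f c B \<alpha> L e"
  shows "\<alpha> * c e * f (set L) / B \<le> marg f e (set L)"
proof -
  have "\<alpha> * f (set L) / B * c e \<le> marg f e (set L)"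
    using assms cost_pos[of e] by (simp add: lar_accepts_def pos_le_divide_eq)
  then show ?thesis by (simp add: algebra_simps)
qed

lemma lar_accepts_marg_nonneg:
  assumes "set L \<subseteq> V" "e \<in> V" "lar_accepts f c B \<alpha> L e"
  shows "0 \<le> marg f e (set L)"
proof -
  have "0 \<le> \<alpha> * c e * f (set L) / B"
    using f_nonneg[OF assms(1)] \<alpha>_pos cost_pos[OF assms(2)] budget_pos by simp
  with lar_accepts_gain[OF assms] show ?thesis by linarith
qed

lemma f_lar_pass_mono:
  "set L \<subseteq> V \<Longrightarrow> set xs \<subseteq> V \<Longrightarrow> f (set L) \<le> f (set (lar_pass f c B \<alpha> L xs))"
proof (induction xs arbitrary: L)
  case (Cons x xs)
  show ?case
  proof (cases "lar_accepts f c B \<alpha> L x")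
    case True
    then have "f (set L) \<le> f (set (L @ [x]))"
      using lar_accepts_marg_nonneg[of L x] Cons.prems by (simp add: marg_def)
    also have "\<dots> \<le> f (set (lar_pass f c B \<alpha> (L @ [x]) xs))"
      using Cons.IH[of "L @ [x]"] Cons.prems by auto
    finally show ?thesis using True by simp
  qed (use Cons in auto)
qed simp

definition accepted_chain :: "'a list \<Rightarrow> bool" where
  "accepted_chain L \<longleftrightarrow> (\<forall>i<length L. lar_accepts f c B \<alpha> (take i L) (L ! i))"

lemma accepted_chain_Nil [simp]: "accepted_chain []"
  by (simp add: accepted_chain_def)

lemma accepted_chain_snoc:
  "accepted_chain (L @ [x]) \<longleftrightarrow> accepted_chain L \<and> lar_accepts f c B \<alpha> L x"
  unfolding accepted_chain_def by (auto simp: nth_append less_Suc_eq)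

lemma accepted_chain_lar_pass:
  "accepted_chain L \<Longrightarrow> accepted_chain (lar_pass f c B \<alpha> L xs)"
  by (induction xs arbitrary: L) (auto simp: accepted_chain_snoc)

text \<open>Each element raised \<open>f\<close> by at least \<open>\<alpha> c(e)/B\<close> times the value of the prefix
  before it, and that value is at least the value of any shorter prefix.\<close>
lemma accepted_chain_prefix_gain:
  assumes "accepted_chain L" "set L \<subseteq> V" "distinct L" "k \<le> length L"
  shows "\<alpha> * cost c (set (drop k L)) * f (set (take k L)) / B \<le> f (set L) - f (set (take k L))"
  using assms
proof (induction L arbitrary: k rule: rev_induct)
  case (snoc x L)
  show ?case
  proof (cases "k = Suc (length L)")
    case True
    then show ?thesis by (simp add: cost_def)
  next
    case False
    then have k: "k \<le> length L" using snoc.prems by auto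
    have accepts: "lar_accepts f c B \<alpha> L x" and x: "x \<in> V" "x \<notin> set L" and L: "set L \<subseteq> V"
      using snoc.prems by (auto simp: accepted_chain_snoc)
    have IH: "\<alpha> * cost c (set (drop k L)) * f (set (take k L)) / B \<le> f (set L) - f (set (take k L))"
      using snoc.IH[OF _ L _ k] snoc.prems by (auto simp: accepted_chain_snoc)
    have "set (take k L) \<subseteq> V" "set (drop k L) \<subseteq> V"
      using L set_take_subset set_drop_subset by fastforce+
    then have "0 \<le> \<alpha> * cost c (set (drop k L)) * f (set (take k L)) / B"
      using \<alpha>_pos budget_pos cost_nonneg f_nonneg by simp
    then have "f (set (take k L)) \<le> f (set L)" using IH by linarith
    then have "\<alpha> * c x * f (set (take k L)) / B \<le> \<alpha> * c x * f (set L) / B"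
      using \<alpha>_pos cost_pos[OF x(1)] budget_pos by (simp add: divide_right_mono)
    also have "\<dots> \<le> f (set L \<union> {x}) - f (set L)"
      using lar_accepts_gain[OF L x(1) accepts] by (simp add: marg_def)
    finally have step: "\<alpha> * c x * f (set (take k L)) / B \<le> f (set L \<union> {x}) - f (set L)" .
    have "x \<notin> set (drop k L)"
      using x(2) set_drop_subset by fastforce
    then have "cost c (set (drop k (L @ [x]))) = c x + cost c (set (drop k L))"
      using k by (simp add: cost_def)
    then have "\<alpha> * cost c (set (drop k (L @ [x]))) * f (set (take k (L @ [x]))) / B
        = \<alpha> * c x * f (set (take k L)) / B + \<alpha> * cost c (set (drop k L)) * f (set (take k L)) / B"
      using k by (simp add: algebra_simps add_divide_distrib)
    with step IH k show ?thesis by simp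
  qed
qed (simp add: cost_def)

lemma lar_suffix_choice:
  assumes "distinct L" "set L \<subseteq> V"
  obtains k where "k \<le> length L" "lar_suffix c B L = set (drop k L)" "cost c (set (drop k L)) \<le> B"
    "0 < k \<longrightarrow> B < cost c (set (drop (k - 1) L))"
proof -
  define P where "P j \<longleftrightarrow> j \<le> length L \<and> cost c (last_added L j) \<le> B" for j
  define j where "j = arg_max (\<lambda>j. cost c (last_added L j)) P"
  have fin: "finite {j. P j}"
    unfolding P_def by (rule finite_subset[of _ "{..length L}"]) auto
  have P_0: "P 0"
    unfolding P_def last_added_def using budget_pos by (simp add: cost_def)
  have P_j: "P j" and j_max: "\<And>i. P i \<Longrightarrow> cost c (last_added L i) \<le> cost c (last_added L j)"
    unfolding j_def by (fact arg_max_finite[OF fin P_0])+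
  have suffix: "lar_suffix c B L = last_added L j"
    unfolding lar_suffix_def j_def P_def by simp
  show ?thesis
  proof (rule that[of "length L - j"]; (intro impI)?)
    assume "0 < length L - j"
    then have j: "j < length L" by simp
    define k where "k = length L - Suc j"
    have drop_k: "drop k L = L ! k # drop (Suc k) L"
      using j unfolding k_def by (simp add: Cons_nth_drop_Suc)
    have "L ! k \<notin> set (drop (Suc k) L)"
      using assms(1) drop_k by (metis distinct.simps(2) distinct_drop)
    moreover have "L ! k \<in> V"
      using assms(2) j unfolding k_def by auto
    ultimately have "cost c (set (drop (Suc k) L)) < cost c (set (drop k L))"
      using drop_k cost_pos by (simp add: cost_def)
    moreover have "last_added L (Suc j) = set (drop k L)" "last_added L j = set (drop (Suc k) L)"
      using j unfolding last_added_def k_def by (simp_all add: Suc_diff_Suc)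
    ultimately have "\<not> P (Suc j)"
      using j_max[of "Suc j"] by auto
    moreover have "length L - j - 1 = k"
      unfolding k_def by simp
    ultimately show "B < cost c (set (drop (length L - j - 1) L))"
      using j \<open>last_added L (Suc j) = set (drop k L)\<close> unfolding P_def by auto
  qed (use P_j suffix in \<open>auto simp: P_def last_added_def\<close>)
qed

lemma lar_suffix_subset: "lar_suffix c B L \<subseteq> set L"
  unfolding lar_suffix_def last_added_def using set_drop_subset by fastforce

lemma cost_lar_suffix_le:
  assumes "distinct L" "set L \<subseteq> V"
  shows "cost c (lar_suffix c B L) \<le> B"
  by (rule lar_suffix_choice[OF assms]) simp

text \<open>The first element outside the chosen suffix has cost at most \<open>B/2\<close>, so the suffix
  costs more than \<open>B/2\<close>, and the prefix gain bound caps the value of the prefix.\<close>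
lemma f_le_lar_suffix:
  assumes "accepted_chain L" "distinct L" "set L \<subseteq> V" "\<And>e. e \<in> set L \<Longrightarrow> c e \<le> B / 2"
  shows "f (set L) \<le> (1 + 2 / \<alpha>) * f (lar_suffix c B L)"
proof -
  obtain k where k: "k \<le> length L" "lar_suffix c B L = set (drop k L)"
    and "cost c (set (drop k L)) \<le> B" and exceeds: "0 < k \<longrightarrow> B < cost c (set (drop (k - 1) L))"
    using lar_suffix_choice[OF assms(2,3)] .
  have parts_V: "set (take k L) \<subseteq> V" "set (drop k L) \<subseteq> V"
    using assms(3) set_take_subset set_drop_subset by fastforce+
  show ?thesis
  proof (cases "k = 0")
    case True
    then show ?thesis
      using k f_nonneg[OF assms(3)] \<alpha>_pos by (simp add: algebra_simps)
  next
    case False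
    then have "k - 1 < length L" "Suc (k - 1) = k"
      using k(1) by auto
    then have drop: "drop (k - 1) L = L ! (k - 1) # drop k L"
      by (metis Cons_nth_drop_Suc)
    have "L ! (k - 1) \<notin> set (drop k L)"
      using assms(2) drop by (metis distinct.simps(2) distinct_drop)
    then have "cost c (set (drop (k - 1) L)) = c (L ! (k - 1)) + cost c (set (drop k L))"
      using drop by (simp add: cost_def)
    moreover have "c (L ! (k - 1)) \<le> B / 2"
      using assms(4) k(1) False by simp
    ultimately have big: "B / 2 < cost c (set (drop k L))"
      using exceeds False by simp
    have "\<alpha> / 2 * f (set (take k L)) = \<alpha> * (B / 2) * f (set (take k L)) / B"
      using budget_pos by simp
    also have "\<dots> \<le> \<alpha> * cost c (set (drop k L)) * f (set (take k L)) / B"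
      using big \<alpha>_pos f_nonneg[OF parts_V(1)] budget_pos
      by (intro divide_right_mono mult_right_mono mult_left_mono) auto
    also have "\<dots> \<le> f (set L) - f (set (take k L))"
      using accepted_chain_prefix_gain[OF assms(1,3,2) k(1)] .
    also have "f (set L) \<le> f (set (take k L)) + f (set (drop k L))"
      using subadditive[OF parts_V] by (metis append_take_drop_id set_append)
    finally have "f (set (take k L)) \<le> 2 / \<alpha> * f (set (drop k L))"
      using \<alpha>_pos by (simp add: field_simps)
    with \<open>f (set L) \<le> f (set (take k L)) + f (set (drop k L))\<close> k(2) show ?thesis
      by (simp add: algebra_simps)
  qed
qed

lemma opt_attained:
  obtains X where "X \<subseteq> V" "cost c X \<le> B" "opt V f c B = f X"
proof -
  have "{f X | X. X \<subseteq> V \<and> cost c X \<le> B} \<subseteq> f ` Pow V"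
    by auto
  then have "finite {f X | X. X \<subseteq> V \<and> cost c X \<le> B}"
    using finite_V finite_subset by blast
  moreover have "{} \<subseteq> V \<and> cost c {} \<le> B"
    using budget_pos by (simp add: cost_def)
  then have "f {} \<in> {f X | X. X \<subseteq> V \<and> cost c X \<le> B}"
    by blast
  ultimately have "opt V f c B \<in> {f X | X. X \<subseteq> V \<and> cost c X \<le> B}"
    unfolding opt_def by (intro Max_in) auto
  then obtain X where "X \<subseteq> V" "cost c X \<le> B" "opt V f c B = f X"
    by blast
  then show ?thesis by (rule that)
qed

lemma expensive_part_cases:
  assumes "X \<subseteq> V" "cost c X \<le> B"
  obtains "X - V_half V c B = {}" "cost c (X \<inter> V_half V c B) \<le> B"
    | x where "X - V_half V c B = {x}" "cost c (X \<inter> V_half V c B) \<le> B / 2"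
proof -
  let ?C = "X \<inter> V_half V c B" and ?E = "X - V_half V c B"
  have fin: "finite ?C" "finite ?E"
    using assms(1) finite_V finite_subset by blast+
  have split: "cost c X = cost c ?C + cost c ?E"
    unfolding cost_def using fin by (subst sum.union_disjoint[symmetric]) (auto intro: sum.cong)
  have expensive: "B / 2 < c x" if "x \<in> ?E" for x
    using that assms(1) by (auto simp: V_half_def)
  have cost_C: "0 \<le> cost c ?C"
    using assms(1) by (intro cost_nonneg) auto
  show ?thesis
  proof (cases "?E = {}")
    case True
    have "cost c ?E = 0"
      unfolding True by (simp add: cost_def)
    show ?thesis
    proof (rule that(1))
      show "?E = {}" by (fact True)
      show "cost c ?C \<le> B"
        using split assms(2) \<open>cost c ?E = 0\<close> by linarith
    qed
  next
    case False
    then obtain x where x: "x \<in> ?E" by blast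
    have cost_E: "cost c ?E = c x + cost c (?E - {x})"
      unfolding cost_def using x fin(2) by (simp add: sum.remove)
    have rest_empty: "?E - {x} = {}"
    proof (rule ccontr)
      assume "?E - {x} \<noteq> {}"
      then obtain y where y: "y \<in> ?E - {x}" by blast
      have "cost c (?E - {x}) = c y + cost c (?E - {x} - {y})"
        unfolding cost_def using y fin(2) by (simp add: sum.remove)
      moreover have "0 \<le> cost c (?E - {x} - {y})"
        using assms(1) by (intro cost_nonneg) auto
      moreover have "B / 2 < c y"
        using y expensive by blast
      ultimately show False
        using split cost_E assms(2) cost_C expensive[OF x] by linarith
    qed
    have "cost c (?E - {x}) = 0"
      unfolding rest_empty by (simp add: cost_def)
    show ?thesis
    proof (rule that(2))
      show "?E = {x}"
        using x rest_empty by blast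
      show "cost c ?C \<le> B / 2"
        using split cost_E \<open>cost c (?E - {x}) = 0\<close> assms(2) expensive[OF x] by linarith
    qed
  qed
qed

definition lar_pass_before :: "'a set \<Rightarrow> 'a list \<Rightarrow> 'a list \<Rightarrow> 'a \<Rightarrow> 'a list" where
  "lar_pass_before Vp L zs u = lar_pass f c B \<alpha> L (filter (\<lambda>e. e \<in> Vp) (takeWhile (\<lambda>x. x \<noteq> u) zs))"

text \<open>The gain \<open>u\<close> would bring when the pass reaches it, also if \<open>u\<close> is not sampled.\<close>
definition gain_at :: "'a set \<Rightarrow> 'a list \<Rightarrow> 'a list \<Rightarrow> 'a \<Rightarrow> real" where
  "gain_at Vp L zs u =
     (if lar_accepts f c B \<alpha> (lar_pass_before Vp L zs u) u
      then marg f u (set (lar_pass_before Vp L zs u)) else 0)"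

lemma gain_at_nonneg:
  "set L \<subseteq> V \<Longrightarrow> set zs \<subseteq> V \<Longrightarrow> u \<in> V \<Longrightarrow> 0 \<le> gain_at Vp L zs u"
  unfolding gain_at_def lar_pass_before_def
  using set_lar_pass_subset[of f c B \<alpha> L "filter (\<lambda>e. e \<in> Vp) (takeWhile (\<lambda>x. x \<noteq> u) zs)"]
  by (auto dest: set_takeWhileD intro!: lar_accepts_marg_nonneg)

text \<open>The gains of the sampled elements telescope.\<close>
lemma sum_sampled_gain_at_le:
  assumes "set L \<subseteq> V" "set zs \<subseteq> V" "distinct zs"
  shows "(\<Sum>u\<in>X \<inter> set zs. if u \<in> Vp then gain_at Vp L zs u else 0)
         \<le> f (set (lar_pass f c B \<alpha> L (filter (\<lambda>e. e \<in> Vp) zs))) - f (set L)"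
  using assms
proof (induction zs arbitrary: L)
  case (Cons z zs)
  define L' where "L' = (if z \<in> Vp \<and> lar_accepts f c B \<alpha> L z then L @ [z] else L)"
  have z: "z \<in> V" "z \<notin> set zs" and zs: "set zs \<subseteq> V" "distinct zs"
    using Cons.prems by auto
  have L': "set L' \<subseteq> V"
    using Cons.prems unfolding L'_def by auto
  have "lar_pass_before Vp L (z # zs) u = lar_pass_before Vp L' zs u" if "u \<in> set zs" for u
    using that z(2) unfolding lar_pass_before_def L'_def by auto
  then have shift: "(\<Sum>u\<in>X \<inter> set zs. if u \<in> Vp then gain_at Vp L (z # zs) u else 0)
      = (\<Sum>u\<in>X \<inter> set zs. if u \<in> Vp then gain_at Vp L' zs u else 0)"
    unfolding gain_at_def by (intro sum.cong) auto
  have first: "(if z \<in> Vp then gain_at Vp L (z # zs) z else 0) = f (set L') - f (set L)"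
    unfolding gain_at_def lar_pass_before_def L'_def by (auto simp: marg_def)
  have "f (set L) \<le> f (set L')"
    using lar_accepts_marg_nonneg[of L z] Cons.prems(1) z(1)
    unfolding L'_def by (auto simp: marg_def)
  have pass: "lar_pass f c B \<alpha> L (filter (\<lambda>e. e \<in> Vp) (z # zs))
      = lar_pass f c B \<alpha> L' (filter (\<lambda>e. e \<in> Vp) zs)"
    unfolding L'_def by auto
  from \<open>f (set L) \<le> f (set L')\<close>
  have "(\<Sum>u\<in>X \<inter> set (z # zs). if u \<in> Vp then gain_at Vp L (z # zs) u else 0)
      \<le> f (set L') - f (set L) + (\<Sum>u\<in>X \<inter> set zs. if u \<in> Vp then gain_at Vp L (z # zs) u else 0)"
    using z(2) first by (cases "z \<in> X") (auto simp: insert_absorb Int_insert_right)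
  also have "\<dots> \<le> f (set (lar_pass f c B \<alpha> L (filter (\<lambda>e. e \<in> Vp) (z # zs)))) - f (set L)"
    using Cons.IH[OF L' zs] shift pass by simp
  finally show ?case .
qed simp

end

locale lar_ordered = lar_setting +
  fixes ord :: "'a list"
  assumes distinct_ord: "distinct ord" and set_ord: "set ord = V"
begin

definition chosen :: "'a set \<Rightarrow> 'a list" where
  "chosen Vp = lar_pass f c B \<alpha> [] (filter (\<lambda>e. e \<in> Vp) ord)"

abbreviation gain :: "'a set \<Rightarrow> 'a \<Rightarrow> real" where
  "gain Vp u \<equiv> gain_at Vp [] ord u"

lemma set_chosen_subset: "set (chosen Vp) \<subseteq> V \<inter> Vp"
  unfolding chosen_def using set_lar_pass_subset[of f c B \<alpha> "[]" "filter (\<lambda>e. e \<in> Vp) ord"] set_ord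
  by auto

lemma distinct_chosen: "distinct (chosen Vp)"
  unfolding chosen_def using distinct_ord by (intro distinct_lar_pass) auto

lemma accepted_chain_chosen: "accepted_chain (chosen Vp)"
  unfolding chosen_def by (rule accepted_chain_lar_pass) simp

lemma f_chosen_nonneg: "0 \<le> f (set (chosen Vp))"
  using set_chosen_subset f_nonneg by blast

lemma gain_nonneg: "u \<in> V \<Longrightarrow> 0 \<le> gain Vp u"
  using set_ord by (intro gain_at_nonneg) auto

lemma gain_cong:
  assumes "\<And>e. e \<noteq> u \<Longrightarrow> e \<in> Vp \<longleftrightarrow> e \<in> Vp'"
  shows "gain Vp u = gain Vp' u"
proof -
  have "filter (\<lambda>e. e \<in> Vp) (takeWhile (\<lambda>x. x \<noteq> u) ord) = filter (\<lambda>e. e \<in> Vp') (takeWhile (\<lambda>x. x \<noteq> u) ord)"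
    using assms by (intro filter_cong refl) (auto dest: set_takeWhileD)
  then show ?thesis unfolding gain_at_def lar_pass_before_def by simp
qed

lemma chosen_split:
  assumes "u \<in> V"
  obtains rest where "set rest \<subseteq> V"
    "chosen Vp = lar_pass f c B \<alpha> (lar_pass_before Vp [] ord u) (filter (\<lambda>e. e \<in> Vp) (u # rest))"
proof -
  obtain pre rest where ord: "ord = pre @ u # rest" and "u \<notin> set pre"
    using split_list_first[of u ord] assms set_ord by auto
  then have "takeWhile (\<lambda>x. x \<noteq> u) ord = pre"
    by (auto simp: takeWhile_append2 takeWhile_tail)
  then have "chosen Vp = lar_pass f c B \<alpha> (lar_pass_before Vp [] ord u) (filter (\<lambda>e. e \<in> Vp) (u # rest))"
    unfolding chosen_def lar_pass_before_def by (subst (1) ord) (simp only: filter_append lar_pass_append)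
  moreover have "set rest \<subseteq> V"
    using ord set_ord by auto
  ultimately show ?thesis using that by blast
qed

lemma set_lar_pass_before_subset: "set (lar_pass_before Vp [] ord u) \<subseteq> V"
  unfolding lar_pass_before_def using set_ord
    set_lar_pass_subset[of f c B \<alpha> "[]" "filter (\<lambda>e. e \<in> Vp) (takeWhile (\<lambda>x. x \<noteq> u) ord)"]
  by (auto dest: set_takeWhileD)

lemma lar_pass_before_chosen:
  assumes "u \<in> V"
  shows "set (lar_pass_before Vp [] ord u) \<subseteq> set (chosen Vp)"
    and "f (set (lar_pass_before Vp [] ord u)) \<le> f (set (chosen Vp))"
    and "lar_accepts f c B \<alpha> (lar_pass_before Vp [] ord u) u \<Longrightarrow> u \<in> Vp \<Longrightarrow> u \<in> set (chosen Vp)"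
proof -
  obtain rest where rest: "set rest \<subseteq> V"
    and split: "chosen Vp = lar_pass f c B \<alpha> (lar_pass_before Vp [] ord u) (filter (\<lambda>e. e \<in> Vp) (u # rest))"
    using chosen_split[OF assms] by blast
  show "set (lar_pass_before Vp [] ord u) \<subseteq> set (chosen Vp)"
    unfolding split using set_lar_pass_mono by fastforce
  show "f (set (lar_pass_before Vp [] ord u)) \<le> f (set (chosen Vp))"
    unfolding split using set_lar_pass_before_subset rest assms by (intro f_lar_pass_mono) auto
  show "u \<in> set (chosen Vp)" if "lar_accepts f c B \<alpha> (lar_pass_before Vp [] ord u) u" "u \<in> Vp"
    using that set_lar_pass_mono[of "lar_pass_before Vp [] ord u @ [u]"] unfolding split by auto
qed

text \<open>An element missing from the final list either failed the threshold when it was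
  processed, or was not sampled; by diminishing returns its marginal gain can only have
  dropped since.\<close>
lemma marg_chosen_le:
  assumes u: "u \<in> V"
  shows "marg f u (set (chosen Vp)) \<le> \<alpha> * c u * f (set (chosen Vp)) / B + (if u \<notin> Vp then gain Vp u else 0)"
proof -
  define S where "S = set (chosen Vp)"
  define T where "T = lar_pass_before Vp [] ord u"
  have S_V: "S \<subseteq> V"
    unfolding S_def using set_chosen_subset by blast
  have threshold_nonneg: "0 \<le> \<alpha> * c u * f S / B"
    using \<alpha>_pos cost_pos[OF u] f_nonneg[OF S_V] budget_pos by simp
  have "0 \<le> gain Vp u" using gain_nonneg[OF u] .
  show ?thesis
  proof (cases "u \<in> S")
    case True
    then have "marg f u S = 0" by (simp add: marg_def insert_absorb)
    with threshold_nonneg \<open>0 \<le> gain Vp u\<close> show ?thesis unfolding S_def by simp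
  next
    case False
    have antimono: "marg f u S \<le> marg f u (set T)"
      using lar_pass_before_chosen(1)[OF u] S_V u False
      unfolding S_def T_def by (intro marg_antimono) auto
    show ?thesis
    proof (cases "lar_accepts f c B \<alpha> T u")
      case True
      then have "u \<notin> Vp"
        using False lar_pass_before_chosen(3)[OF u] unfolding S_def T_def by blast
      with True antimono threshold_nonneg show ?thesis
        unfolding gain_at_def T_def[symmetric] S_def by simp
    next
      case False
      then have "marg f u (set T) / c u < \<alpha> * f (set T) / B"
        by (simp add: lar_accepts_def not_le)
      then have "marg f u (set T) < \<alpha> * f (set T) / B * c u"
        using cost_pos[OF u] by (metis pos_divide_less_eq)
      also have "\<dots> \<le> \<alpha> * f S / B * c u"
        using lar_pass_before_chosen(2)[OF u] \<alpha>_pos budget_pos cost_pos[OF u]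
        unfolding S_def T_def by (intro mult_right_mono divide_right_mono mult_left_mono) auto
      finally show ?thesis
        using antimono \<open>0 \<le> gain Vp u\<close> unfolding S_def by (simp add: algebra_simps)
    qed
  qed
qed

lemma f_chosen_union_le:
  assumes "X \<subseteq> V"
  shows "f (set (chosen Vp) \<union> X) \<le> (1 + \<alpha> * cost c X / B) * f (set (chosen Vp))
           + (\<Sum>u\<in>X. if u \<notin> Vp then gain Vp u else 0)"
proof -
  have "finite X" using assms finite_V finite_subset by auto
  have "f (set (chosen Vp) \<union> X) \<le> f (set (chosen Vp)) + (\<Sum>u\<in>X. marg f u (set (chosen Vp)))"
    using f_union_le_sum_marg[OF \<open>finite X\<close> assms] set_chosen_subset by auto
  also have "(\<Sum>u\<in>X. marg f u (set (chosen Vp)))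
      \<le> (\<Sum>u\<in>X. \<alpha> * c u * f (set (chosen Vp)) / B + (if u \<notin> Vp then gain Vp u else 0))"
    using assms by (intro sum_mono marg_chosen_le) auto
  finally show ?thesis
    by (simp add: sum.distrib cost_def sum_divide_distrib sum_distrib_left sum_distrib_right algebra_simps)
qed

lemma sum_sampled_gain_le:
  assumes "X \<subseteq> V"
  shows "(\<Sum>u\<in>X. if u \<in> Vp then gain Vp u else 0) \<le> f (set (chosen Vp))"
proof -
  have "X \<inter> set ord = X" using assms set_ord by auto
  then show ?thesis
    using sum_sampled_gain_at_le[where L="[]" and zs=ord and X=X and Vp=Vp] distinct_ord set_ord
    unfolding chosen_def by simp
qed

end

section \<open>Sampling the cheap elements\<close>

definition lar_factor :: "real \<Rightarrow> real \<Rightarrow> real \<Rightarrow> real" where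
  "lar_factor p \<alpha> \<beta> = (1 + \<alpha> * \<beta> + (1 - p) / p) * (1 + 2 / \<alpha>) / (1 - p)"

locale lar_sampling = lar_ordered +
  fixes p :: real
  assumes p_pos: "0 < p" and p_less_1: "p < 1"
begin

abbreviation cheap :: "'a set" where
  "cheap \<equiv> V_half V c B"

definition coins :: "('a \<Rightarrow> bool) pmf" where
  "coins = Pi_pmf cheap False (\<lambda>_. bernoulli_pmf p)"

definition sampled :: "('a \<Rightarrow> bool) \<Rightarrow> 'a set" where
  "sampled b = {e \<in> cheap. b e}"

lemma cheap_subset: "cheap \<subseteq> V"
  by (auto simp: V_half_def)

lemma finite_cheap: "finite cheap"
  using cheap_subset finite_V finite_subset by blast

lemma integrable_coins: "integrable (measure_pmf coins) (h :: ('a \<Rightarrow> bool) \<Rightarrow> real)"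
  unfolding coins_def using finite_cheap
  by (intro integrable_measure_pmf_finite finite_set_pmf_Pi_bernoulli)

lemma expectation_sampled_gain:
  assumes "u \<in> cheap"
  shows "measure_pmf.expectation coins (\<lambda>b. if b u then gain (sampled b) u else 0)
       = p * measure_pmf.expectation coins (\<lambda>b. gain (sampled b) u)"
proof -
  have "gain (sampled (b(u := t))) u = gain (sampled b) u" for b t
    by (rule gain_cong) (auto simp: sampled_def)
  then show ?thesis
    unfolding coins_def using assms p_pos p_less_1 finite_cheap
    by (intro expectation_Pi_bernoulli_if_component) auto
qed

lemma expectation_unsampled_gain:
  assumes "u \<in> cheap"
  shows "measure_pmf.expectation coins (\<lambda>b. if \<not> b u then gain (sampled b) u else 0)
       = (1 - p) * measure_pmf.expectation coins (\<lambda>b. gain (sampled b) u)"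
proof -
  have "(\<lambda>b. if \<not> b u then gain (sampled b) u else 0)
      = (\<lambda>b. gain (sampled b) u - (if b u then gain (sampled b) u else 0))"
    by auto
  then show ?thesis
    using expectation_sampled_gain[OF assms]
    by (simp add: Bochner_Integration.integral_diff[OF integrable_coins integrable_coins] algebra_simps)
qed

text \<open>Whether \<open>u\<close> is sampled is independent of its gain, so the unsampled gains are in
  expectation \<open>(1 - p)/p\<close> times the sampled ones, which telescope.\<close>
lemma expectation_unsampled_gains_le:
  assumes "X \<subseteq> cheap"
  shows "measure_pmf.expectation coins (\<lambda>b. \<Sum>u\<in>X. if u \<notin> sampled b then gain (sampled b) u else 0)
     \<le> (1 - p) / p * measure_pmf.expectation coins (\<lambda>b. f (set (chosen (sampled b))))"
proof -
  define EG where "EG u = measure_pmf.expectation coins (\<lambda>b. gain (sampled b) u)" for u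
  have "measure_pmf.expectation coins (\<lambda>b. \<Sum>u\<in>X. if u \<notin> sampled b then gain (sampled b) u else 0)
      = (\<Sum>u\<in>X. measure_pmf.expectation coins (\<lambda>b. if \<not> b u then gain (sampled b) u else 0))"
    using assms by (subst Bochner_Integration.integral_sum[OF integrable_coins, symmetric])
      (auto intro!: Bochner_Integration.integral_cong sum.cong simp: sampled_def)
  also have "\<dots> = (1 - p) * (\<Sum>u\<in>X. EG u)"
    unfolding EG_def sum_distrib_left using assms
    by (intro sum.cong refl expectation_unsampled_gain) auto
  finally have unsampled: "measure_pmf.expectation coins
      (\<lambda>b. \<Sum>u\<in>X. if u \<notin> sampled b then gain (sampled b) u else 0) = (1 - p) * (\<Sum>u\<in>X. EG u)" .
  have "p * (\<Sum>u\<in>X. EG u)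
      = (\<Sum>u\<in>X. measure_pmf.expectation coins (\<lambda>b. if b u then gain (sampled b) u else 0))"
    unfolding EG_def sum_distrib_left using assms
    by (intro sum.cong refl expectation_sampled_gain[symmetric]) auto
  also have "\<dots> = measure_pmf.expectation coins (\<lambda>b. \<Sum>u\<in>X. if u \<in> sampled b then gain (sampled b) u else 0)"
    using assms by (subst Bochner_Integration.integral_sum[OF integrable_coins])
      (auto intro!: Bochner_Integration.integral_cong sum.cong simp: sampled_def)
  also have "\<dots> \<le> measure_pmf.expectation coins (\<lambda>b. f (set (chosen (sampled b))))"
    using assms cheap_subset
    by (intro integral_mono[OF integrable_coins integrable_coins] sum_sampled_gain_le) auto
  finally have "(1 - p) / p * (p * (\<Sum>u\<in>X. EG u))
      \<le> (1 - p) / p * measure_pmf.expectation coins (\<lambda>b. f (set (chosen (sampled b))))"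
    using p_pos p_less_1 by (intro mult_left_mono) auto
  with unsampled p_pos show ?thesis by simp
qed

lemma expectation_f_chosen_union_ge:
  assumes "X \<subseteq> V"
  shows "(1 - p) * f X \<le> measure_pmf.expectation coins (\<lambda>b. f (set (chosen (sampled b)) \<union> X))"
proof -
  define D where "D = map_pmf (\<lambda>b. set (chosen (sampled b))) coins"
  have "measure_pmf.prob D {A. u \<in> A} \<le> p" for u
  proof -
    have "measure_pmf.prob D {A. u \<in> A} = measure_pmf.prob coins {b. u \<in> set (chosen (sampled b))}"
      unfolding D_def by (simp add: measure_map_pmf vimage_def)
    also have "\<dots> \<le> measure_pmf.prob coins {b. b u}"
      using set_chosen_subset by (intro measure_pmf.finite_measure_mono) (auto simp: sampled_def)
    also have "\<dots> \<le> p"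
      unfolding coins_def using finite_cheap p_pos p_less_1 by (intro prob_Pi_bernoulli_component_le) auto
    finally show ?thesis .
  qed
  moreover have "f ((A \<union> A') \<union> X) + f ((A \<inter> A') \<union> X) \<le> f (A \<union> X) + f (A' \<union> X)"
    if "A \<subseteq> V" "A' \<subseteq> V" for A A'
  proof -
    have "(A \<union> X) \<union> (A' \<union> X) = (A \<union> A') \<union> X" "(A \<union> X) \<inter> (A' \<union> X) = (A \<inter> A') \<union> X"
      by auto
    then show ?thesis
      using submodular[of "A \<union> X" "A' \<union> X"] that assms by simp
  qed
  moreover have "A \<subseteq> V" if "A \<in> set_pmf D" for A
    using that set_chosen_subset unfolding D_def by auto
  ultimately have "(1 - p) * f ({} \<union> X) + 0 * f (V \<union> X) \<le> measure_pmf.expectation D (\<lambda>A. f (A \<union> X))"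
    using assms p_pos p_less_1
    by (intro expectation_submodular_random_subset_ge[where g = "\<lambda>A. f (A \<union> X)"] finite_V)
      (auto simp: D_def coins_def finite_cheap finite_set_pmf_Pi_bernoulli intro!: f_nonneg)
  then show ?thesis
    unfolding D_def by simp
qed

lemma expectation_f_chosen_ge:
  assumes "X \<subseteq> cheap"
  shows "(1 - p) * f X \<le> (1 + \<alpha> * cost c X / B + (1 - p) / p)
           * measure_pmf.expectation coins (\<lambda>b. f (set (chosen (sampled b))))"
proof -
  let ?E = "measure_pmf.expectation coins"
  let ?missed = "\<lambda>b. \<Sum>u\<in>X. if u \<notin> sampled b then gain (sampled b) u else 0"
  have "(1 - p) * f X \<le> ?E (\<lambda>b. f (set (chosen (sampled b)) \<union> X))"
    using assms cheap_subset by (intro expectation_f_chosen_union_ge) auto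
  also have "\<dots> \<le> ?E (\<lambda>b. (1 + \<alpha> * cost c X / B) * f (set (chosen (sampled b))) + ?missed b)"
    using assms cheap_subset
    by (intro integral_mono[OF integrable_coins integrable_coins] f_chosen_union_le) auto
  also have "\<dots> = (1 + \<alpha> * cost c X / B) * ?E (\<lambda>b. f (set (chosen (sampled b)))) + ?E ?missed"
    by (simp add: Bochner_Integration.integral_add[OF integrable_coins integrable_coins])
  also have "\<dots> \<le> (1 + \<alpha> * cost c X / B) * ?E (\<lambda>b. f (set (chosen (sampled b))))
      + (1 - p) / p * ?E (\<lambda>b. f (set (chosen (sampled b))))"
    using expectation_unsampled_gains_le[OF assms] by simp
  finally show ?thesis
    by (simp add: algebra_simps)
qed


definition lar_output :: "'a set \<Rightarrow> 'a set" where
  "lar_output Vp = (if f {e_max V f} \<le> f (lar_suffix c B (chosen Vp))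
                    then lar_suffix c B (chosen Vp) else {e_max V f})"

lemma e_max:
  assumes "V \<noteq> {}"
  shows "e_max V f \<in> V" "e \<in> V \<Longrightarrow> f {e} \<le> f {e_max V f}"
proof -
  obtain v where "v \<in> V" using assms by blast
  then show "e_max V f \<in> V" "e \<in> V \<Longrightarrow> f {e} \<le> f {e_max V f}"
    unfolding e_max_def using arg_max_finite[of "\<lambda>e. e \<in> V"] finite_V by auto
qed

lemma lar_run_eq:
  "lar_run V f c B \<alpha> ord Vp = (lar_output Vp, card V + 2 * length (filter (\<lambda>e. e \<in> Vp) ord) + 2)"
  unfolding lar_run_def lar_greedy_def foldl_lar_step lar_output_def chosen_def by (simp add: Let_def)

lemma LAR_eq: "LAR V f c B p \<alpha> ord = map_pmf (\<lambda>b. lar_run V f c B \<alpha> ord (sampled b)) coins"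
  unfolding LAR_def sample_pmf_def coins_def sampled_def by (simp add: pmf.map_comp o_def)

lemma chosen_sampled_cheap: "e \<in> set (chosen (sampled b)) \<Longrightarrow> c e \<le> B / 2"
  using set_chosen_subset by (auto simp: sampled_def V_half_def)

lemma LAR_support:
  assumes "V \<noteq> {}" "(S, q) \<in> set_pmf (LAR V f c B p \<alpha> ord)"
  shows "real q \<le> 5 * real (card V)" "cost c S \<le> B"
proof -
  obtain b where "(S, q) = lar_run V f c B \<alpha> ord (sampled b)"
    using assms(2) unfolding LAR_eq by auto
  then have S: "S = lar_output (sampled b)"
    and q: "q = card V + 2 * length (filter (\<lambda>e. e \<in> sampled b) ord) + 2"
    by (simp_all add: lar_run_eq)
  have "1 \<le> card V"
    using assms(1) finite_V by (simp add: Suc_le_eq card_gt_0_iff)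
  moreover have "length (filter (\<lambda>e. e \<in> sampled b) ord) \<le> card V"
    using length_filter_le[of _ ord] distinct_card[OF distinct_ord] set_ord by simp
  ultimately show "real q \<le> 5 * real (card V)"
    unfolding q by linarith
  have "cost c (lar_suffix c B (chosen (sampled b))) \<le> B"
    using distinct_chosen set_chosen_subset by (intro cost_lar_suffix_le) auto
  moreover have "cost c {e_max V f} \<le> B"
    using e_max(1)[OF assms(1)] cost_le_budget by (simp add: cost_def)
  ultimately show "cost c S \<le> B"
    unfolding S lar_output_def by auto
qed

lemma expectation_LAR:
  "measure_pmf.expectation (LAR V f c B p \<alpha> ord) (\<lambda>(S, q). f S)
     = measure_pmf.expectation coins (\<lambda>b. f (lar_output (sampled b)))"
  unfolding LAR_eq by (simp add: lar_run_eq)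

lemma f_lar_output_nonneg:
  assumes "V \<noteq> {}"
  shows "0 \<le> f (lar_output Vp)"
proof -
  have "lar_suffix c B (chosen Vp) \<subseteq> V"
    using lar_suffix_subset set_chosen_subset by blast
  then show ?thesis
    unfolding lar_output_def using e_max(1)[OF assms] f_nonneg by auto
qed

lemma expectation_f_chosen_le:
  "measure_pmf.expectation coins (\<lambda>b. f (set (chosen (sampled b))))
     \<le> (1 + 2 / \<alpha>) * measure_pmf.expectation coins (\<lambda>b. f (lar_output (sampled b)))"
proof -
  have "f (set (chosen (sampled b))) \<le> (1 + 2 / \<alpha>) * f (lar_output (sampled b))" for b
  proof -
    have "f (set (chosen (sampled b))) \<le> (1 + 2 / \<alpha>) * f (lar_suffix c B (chosen (sampled b)))"
      using accepted_chain_chosen distinct_chosen set_chosen_subset chosen_sampled_cheap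
      by (intro f_le_lar_suffix) auto
    also have "\<dots> \<le> (1 + 2 / \<alpha>) * f (lar_output (sampled b))"
      using \<alpha>_pos by (intro mult_left_mono) (auto simp: lar_output_def)
    finally show ?thesis .
  qed
  then have "measure_pmf.expectation coins (\<lambda>b. f (set (chosen (sampled b))))
      \<le> measure_pmf.expectation coins (\<lambda>b. (1 + 2 / \<alpha>) * f (lar_output (sampled b)))"
    by (intro integral_mono[OF integrable_coins integrable_coins])
  then show ?thesis by simp
qed

lemma f_cheap_le:
  assumes "X \<subseteq> cheap" "cost c X \<le> \<beta> * B"
  shows "f X \<le> lar_factor p \<alpha> \<beta> * measure_pmf.expectation coins (\<lambda>b. f (lar_output (sampled b)))"
proof -
  let ?ES = "measure_pmf.expectation coins (\<lambda>b. f (set (chosen (sampled b))))"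
  let ?EO = "measure_pmf.expectation coins (\<lambda>b. f (lar_output (sampled b)))"
  have "0 \<le> ?ES"
    by (intro integral_nonneg_AE) (simp add: f_chosen_nonneg)
  have "\<alpha> * cost c X / B \<le> \<alpha> * \<beta>"
    using assms(2) \<alpha>_pos budget_pos by (simp add: divide_le_eq mult.assoc)
  then have "(1 - p) * f X \<le> (1 + \<alpha> * \<beta> + (1 - p) / p) * ?ES"
    using expectation_f_chosen_ge[OF assms(1)] \<open>0 \<le> ?ES\<close>
    by (meson add_le_cancel_right add_left_mono mult_right_mono order_trans)
  also have "\<dots> \<le> (1 + \<alpha> * \<beta> + (1 - p) / p) * ((1 + 2 / \<alpha>) * ?EO)"
    using expectation_f_chosen_le p_pos p_less_1 \<open>\<alpha> * cost c X / B \<le> \<alpha> * \<beta>\<close> \<alpha>_pos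
      cost_nonneg[of X] assms(1) cheap_subset budget_pos
    by (intro mult_left_mono) (auto intro!: add_nonneg_nonneg order_trans[OF _ \<open>\<alpha> * cost c X / B \<le> \<alpha> * \<beta>\<close>])
  finally show ?thesis
    using p_less_1 by (simp add: lar_factor_def pos_le_divide_eq mult_ac)
qed

lemma opt_le_expectation_LAR:
  assumes "V \<noteq> {}" "lar_factor p \<alpha> 1 \<le> K" "lar_factor p \<alpha> (1 / 2) + 1 \<le> K"
  shows "opt V f c B \<le> K * measure_pmf.expectation (LAR V f c B p \<alpha> ord) (\<lambda>(S, q). f S)"
proof -
  let ?EO = "measure_pmf.expectation coins (\<lambda>b. f (lar_output (sampled b)))"
  have "0 \<le> ?EO"
    using f_lar_output_nonneg[OF assms(1)] by (intro integral_nonneg_AE) auto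
  have "f {e_max V f} \<le> ?EO"
    using integral_mono[OF integrable_coins integrable_coins, of "\<lambda>_. f {e_max V f}"]
    by (simp add: lar_output_def)
  obtain X where X: "X \<subseteq> V" "cost c X \<le> B" and opt: "opt V f c B = f X"
    by (rule opt_attained)
  have cheap_part: "X \<inter> cheap \<subseteq> cheap" by blast
  from X show ?thesis
  proof (cases rule: expensive_part_cases)
    case 1
    then have "X = X \<inter> cheap" by blast
    then have "f X \<le> lar_factor p \<alpha> 1 * ?EO"
      using f_cheap_le[OF cheap_part, of 1] 1 by simp
    also have "\<dots> \<le> K * ?EO"
      using assms(2) \<open>0 \<le> ?EO\<close> by (rule mult_right_mono)
    finally show ?thesis using opt expectation_LAR by simp
  next
    case (2 x)
    then have "X = (X \<inter> cheap) \<union> {x}" "x \<in> V"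
      using X(1) by blast+
    then have "f X \<le> f (X \<inter> cheap) + f {x}"
      using subadditive[of "X \<inter> cheap" "{x}"] X(1) by auto
    also have "\<dots> \<le> lar_factor p \<alpha> (1 / 2) * ?EO + ?EO"
      using f_cheap_le[OF cheap_part, of "1 / 2"] 2 e_max(2)[OF assms(1) \<open>x \<in> V\<close>]
        \<open>f {e_max V f} \<le> ?EO\<close> by simp
    also have "\<dots> \<le> K * ?EO"
      using mult_right_mono[OF assms(3) \<open>0 \<le> ?EO\<close>] by (simp add: algebra_simps)
    finally show ?thesis using opt expectation_LAR by simp
  qed
qed

end


section \<open>Numerical bounds\<close>

lemma lar_factor_bounds:
  defines "p \<equiv> sqrt 2 - 1" and "\<alpha> \<equiv> sqrt (2 + 2 * sqrt 2)"
  shows "0 < p" "p < 1" "0 < \<alpha>"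
    "lar_factor p \<alpha> 1 \<le> 16.034" "lar_factor p \<alpha> (1 / 2) + 1 \<le> 16.034"
proof -
  have s1: "1.4142 < sqrt 2"
    by (rule real_less_rsqrt) (simp add: power2_eq_square)
  have "sqrt 2 < sqrt (1.41422 ^ 2)"
    by (intro real_sqrt_less_mono) (simp add: power2_eq_square)
  then have s2: "sqrt 2 < 1.41422" by simp
  have a1: "2.1973 < \<alpha>"
    unfolding \<alpha>_def by (rule real_less_rsqrt) (use s1 in \<open>simp add: power2_eq_square\<close>)
  have "\<alpha> < sqrt (2.1974 ^ 2)"
    unfolding \<alpha>_def using s2 by (intro real_sqrt_less_mono) (simp add: power2_eq_square)
  then have a2: "\<alpha> < 2.1974" by simp
  show "0 < p" "p < 1" "0 < \<alpha>"
    using s1 s2 a1 unfolding p_def by auto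
  have q: "0 \<le> (1 - p) / p" "(1 - p) / p \<le> 1.4143"
    using s1 s2 unfolding p_def by (simp_all add: divide_le_eq)
  have r: "0 \<le> 1 / (1 - p)" "1 / (1 - p) \<le> 1.7075"
    using s1 s2 unfolding p_def by (simp_all add: divide_le_eq)
  have t: "1 + 2 / \<alpha> \<le> 1.9103"
    using a1 by (simp add: divide_le_eq)
  have "lar_factor p \<alpha> \<beta> \<le> (1 + 2.1974 * \<beta> + 1.4143) * 1.9103 * 1.7075" if "0 \<le> \<beta>" for \<beta>
  proof -
    have "\<alpha> * \<beta> \<le> 2.1974 * \<beta>"
      using a2 that by (intro mult_right_mono) auto
    then have first: "1 + \<alpha> * \<beta> + (1 - p) / p \<le> 1 + 2.1974 * \<beta> + 1.4143"
      using q(2) by linarith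
    have "lar_factor p \<alpha> \<beta> = (1 + \<alpha> * \<beta> + (1 - p) / p) * (1 + 2 / \<alpha>) * (1 / (1 - p))"
      unfolding lar_factor_def by simp
    also have "\<dots> \<le> (1 + 2.1974 * \<beta> + 1.4143) * 1.9103 * 1.7075"
      by (intro mult_mono first t r(2)) (use q(1) r(1) a1 that in auto)
    finally show ?thesis .
  qed
  from this[of 1] this[of "1 / 2"]
  show "lar_factor p \<alpha> 1 \<le> 16.034" "lar_factor p \<alpha> (1 / 2) + 1 \<le> 16.034"
    by simp_all
qed

theorem theorem2:
  "\<exists>C::real. \<forall>(V::'a set) f c B ord.
       finite V \<longrightarrow> V \<noteq> {} \<longrightarrow> nonneg_submodular V f \<longrightarrow>
       (\<forall>e\<in>V. c e > 0 \<and> c e \<le> B) \<longrightarrow> B > 0 \<longrightarrow>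
       distinct ord \<longrightarrow> set ord = V \<longrightarrow>
       (let D = LAR V f c B (sqrt 2 - 1) (sqrt (2 + 2 * sqrt 2)) ord in
         (\<forall>(S, q) \<in> set_pmf D. real q \<le> C * real (card V) \<and> cost c S \<le> B) \<and>
         opt V f c B \<le> 16.034 * measure_pmf.expectation D (\<lambda>(S, q). f S))"
proof (intro exI[of _ 5] allI impI)
  fix V :: "'a set" and f :: "'a set \<Rightarrow> real" and c :: "'a \<Rightarrow> real" and B :: real
    and ord :: "'a list"
  assume "finite V" "V \<noteq> {}" "nonneg_submodular V f" "\<forall>e\<in>V. c e > 0 \<and> c e \<le> B" "B > 0"
    "distinct ord" "set ord = V"
  then interpret lar_sampling V f c B "sqrt (2 + 2 * sqrt 2)" ord "sqrt 2 - 1"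
    using lar_factor_bounds(1-3) by unfold_locales auto
  show "let D = LAR V f c B (sqrt 2 - 1) (sqrt (2 + 2 * sqrt 2)) ord in
      (\<forall>(S, q) \<in> set_pmf D. real q \<le> 5 * real (card V) \<and> cost c S \<le> B) \<and>
      opt V f c B \<le> 16.034 * measure_pmf.expectation D (\<lambda>(S, q). f S)"
    using LAR_support[OF \<open>V \<noteq> {}\<close>]
      opt_le_expectation_LAR[OF \<open>V \<noteq> {}\<close> lar_factor_bounds(4,5)]
    unfolding Let_def by auto
qed

end
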